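(* Let $R$ be the semiring $\mathbb{N}[T_1,T_2,T_3,T_4]/\langle T_1T_4\sim T_2T_3+1\rangle$, i.e. the quotient of the polynomial semiring over $\mathbb{N}$ by the smallest congruence containing the relation $T_1T_4\sim T_2T_3+1$, and let $A\subset R$ be the multiplicative subset consisting of $0$ and the images of all monomials $T_1^{e_1}T_2^{e_2}T_3^{e_3}T_4^{e_4}$ ($e_i\geq 0$). Let $B=(R,A)$ be the corresponding blueprint. Then the prime $k$-ideals of $B$ are exactly the following seven sets: $\{0\}$, $(T_1)$, $(T_2)$, $(T_3)$, $(T_4)$, $(T_1,T_4)$ and $(T_2,T_3)$, where $(T_i)_{i\in I}$ denotes the monoid ideal of $A$ generated by $\{T_i: i\in I\}$. In particular, $\operatorname{Spec}B$ has exactly seven points, its closed points being $(T_1,T_4)$ and $(T_2,T_3)$.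
   Context: A semiring is a set with commutative associative addition with neutral element $0$ and commutative associative multiplication with neutral element $1$, with $0$ absorbing and multiplication distributing over addition (no additive inverses required). A congruence on a semiring is an equivalence relation compatible with addition and multiplication. A blueprint is a pair $B=(R,A)$ of a semiring $R=B^+$ and a multiplicative subset $A=B^\bullet$ of $R$ containing $0$ and $1$ that generates $R$ as a semiring. An ideal of the monoid $B^\bullet$ is a subset $I$ with $0\in I$ and $ab\in I$ for all $a\in I$, $b\in B^\bullet$; the ideal generated by a subset is the smallest ideal containing it. A $k$-ideal of $B$ is an ideal $I$ of $B^\bullet$ such that $c\in I$ whenever $c\in B^\bullet$ and there are $a_1,\dots,a_n,b_1,\dots,b_m\in I$ with $\sum a_i+c=\sum b_j$ in $B^+$. A $k$-ideal $\mathfrak p$ is prime if $B^\bullet\setminus\mathfrak p$ contains $1$ and is closed under multiplication. $\operatorname{Spec}B$ is the set of prime $k$-ideals with the topology generated by the sets $U_h=\{\mathfrak p: h\notin\mathfrak p\}$, $h\in B^\bullet$. *)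

theory Defs
  imports "HOL-Library.Poly_Mapping" "HOL-Analysis.Analysis"
begin

text \<open>A blueprint is given by an ambient semiring (a type of class comm_semiring_0 with a
  commutative multiplicative unit; the axiom 0 \<noteq> 1 is not required, matching the paper's notion)
  together with a multiplicative subset A (the monoid B-bullet).\<close>

definition monoid_ideal :: "'r::{comm_semiring_0, comm_monoid_mult} set \<Rightarrow> 'r set \<Rightarrow> bool" where
  "monoid_ideal A I \<longleftrightarrow> I \<subseteq> A \<and> 0 \<in> I \<and> (\<forall>a\<in>I. \<forall>b\<in>A. a * b \<in> I)"

definition ideal_gen :: "'r::{comm_semiring_0, comm_monoid_mult} set \<Rightarrow> 'r set \<Rightarrow> 'r set" where
  "ideal_gen A S = \<Inter>{I. monoid_ideal A I \<and> S \<subseteq> I}"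

definition k_ideal :: "'r::{comm_semiring_0, comm_monoid_mult} set \<Rightarrow> 'r set \<Rightarrow> bool" where
  "k_ideal A I \<longleftrightarrow> monoid_ideal A I \<and>
     (\<forall>c\<in>A. (\<exists>as bs. set as \<subseteq> I \<and> set bs \<subseteq> I \<and> sum_list as + c = sum_list bs) \<longrightarrow> c \<in> I)"

definition prime_k_ideal :: "'r::{comm_semiring_0, comm_monoid_mult} set \<Rightarrow> 'r set \<Rightarrow> bool" where
  "prime_k_ideal A p \<longleftrightarrow> k_ideal A p \<and> 1 \<in> A - p \<and>
     (\<forall>a\<in>A - p. \<forall>b\<in>A - p. a * b \<in> A - p)"

definition Spec :: "'r::{comm_semiring_0, comm_monoid_mult} set \<Rightarrow> 'r set set" where
  "Spec A = {p. prime_k_ideal A p}"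

definition spec_topology :: "'r::{comm_semiring_0, comm_monoid_mult} set \<Rightarrow> 'r set topology" where
  "spec_topology A = topology_generated_by ((\<lambda>h. {p \<in> Spec A. h \<notin> p}) ` A)"

datatype var = V1 | V2 | V3 | V4

type_synonym poly = "(var \<Rightarrow>\<^sub>0 nat) \<Rightarrow>\<^sub>0 nat"

definition Tvar :: "var \<Rightarrow> poly" where
  "Tvar v = Poly_Mapping.single (Poly_Mapping.single v 1) 1"

inductive rel :: "poly \<Rightarrow> poly \<Rightarrow> bool" where
  base: "rel (Tvar V1 * Tvar V4) (Tvar V2 * Tvar V3 + 1)"
| refl: "rel p p"
| sym: "rel p q \<Longrightarrow> rel q p"
| trans: "rel p q \<Longrightarrow> rel q r \<Longrightarrow> rel p r"
| add: "rel p q \<Longrightarrow> rel r s \<Longrightarrow> rel (p + r) (q + s)"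
| mult: "rel p q \<Longrightarrow> rel r s \<Longrightarrow> rel (p * r) (q * s)"

lemma equivp_rel: "equivp rel"
  by (intro equivpI reflpI sympI transpI) (auto intro: rel.intros)

lemma eq_rel: "x = y \<Longrightarrow> rel x y"
  by (simp add: rel.refl)

quotient_type R = poly / rel
  by (rule equivp_rel)

instantiation R :: "{comm_semiring_0, comm_monoid_mult}"
begin

lift_definition zero_R :: R is 0 .
lift_definition one_R :: R is 1 .
lift_definition plus_R :: "R \<Rightarrow> R \<Rightarrow> R" is "(+)" by (rule rel.add)
lift_definition times_R :: "R \<Rightarrow> R \<Rightarrow> R" is "(*)" by (rule rel.mult)

instance
proof
  fix a b c :: R
  show "a * b * c = a * (b * c)" by transfer (rule eq_rel, rule mult.assoc)
  show "a * b = b * a" by transfer (rule eq_rel, rule mult.commute)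
  show "1 * a = a" by transfer (rule eq_rel, simp)
  show "a + b + c = a + (b + c)" by transfer (rule eq_rel, rule add.assoc)
  show "a + b = b + a" by transfer (rule eq_rel, rule add.commute)
  show "0 + a = a" by transfer (rule eq_rel, simp)
  show "0 * a = 0" by transfer (rule eq_rel, simp)
  show "a * 0 = 0" by transfer (rule eq_rel, simp)
  show "(a + b) * c = a * c + b * c" by transfer (rule eq_rel, rule distrib_right)
qed

end

lift_definition T :: "var \<Rightarrow> R" is Tvar .

definition A_R :: "R set" where
  "A_R = insert 0 (range (\<lambda>e. abs_R (Poly_Mapping.single e 1)))"

end

theory Submission
  imports Defs
begin

text \<open>
  At an integer point \<open>v\<close> of the quadric \<open>v\<^sub>1 v\<^sub>4 = v\<^sub>2 v\<^sub>3 + 1\<close> evaluation is a semiring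
  map \<open>R \<rightarrow> \<int>\<close>, so the elements of \<open>A\<close> vanishing at \<open>v\<close> form a prime k-ideal; it is the
  monoid ideal generated by the \<open>T\<^sub>i\<close> with \<open>v\<^sub>i = 0\<close>. Conversely a prime k-ideal contains a
  monomial iff it contains one of its variables, so it is determined by the set of \<open>T\<^sub>i\<close> it
  contains. This set cannot meet both \<open>{T\<^sub>1, T\<^sub>4}\<close> and \<open>{T\<^sub>2, T\<^sub>3}\<close>: otherwise \<open>T\<^sub>2T\<^sub>3\<close> and
  \<open>T\<^sub>2T\<^sub>3 + 1 = T\<^sub>1T\<^sub>4\<close> both lie in the ideal, and the k-ideal property puts \<open>1\<close> in it. Each of
  the seven remaining sets is the zero set of an integer point of the quadric. Finally, the
  closure of a point of the spectrum consists of the primes containing it, so the closed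
  points are the two maximal primes.
\<close>

lemma ideal_gen_least: "monoid_ideal A I \<Longrightarrow> S \<subseteq> I \<Longrightarrow> ideal_gen A S \<subseteq> I"
  by (auto simp: ideal_gen_def)

lemma ideal_gen_superset: "S \<subseteq> ideal_gen A S"
  by (auto simp: ideal_gen_def)

lemma monoid_ideal_ideal_gen:
  assumes "0 \<in> A" "S \<subseteq> A" "\<And>a b. a \<in> A \<Longrightarrow> b \<in> A \<Longrightarrow> a * b \<in> A"
  shows "monoid_ideal A (ideal_gen A S)"
proof -
  have "monoid_ideal A A"
    using assms by (simp add: monoid_ideal_def)
  then show ?thesis
    using assms(2) by (auto simp: ideal_gen_def monoid_ideal_def)
qed

lemma ideal_gen_empty: "0 \<in> A \<Longrightarrow> ideal_gen A {} = {0}"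
  by (rule antisym, rule ideal_gen_least) (auto simp: monoid_ideal_def ideal_gen_def)

lemma prime_k_ideal_mult_iff:
  assumes "prime_k_ideal A p" "a \<in> A" "b \<in> A"
  shows "a * b \<in> p \<longleftrightarrow> a \<in> p \<or> b \<in> p"
  using assms unfolding prime_k_ideal_def k_ideal_def monoid_ideal_def
  by (metis Diff_iff mult.commute)

lemma prime_k_ideal_add_one:
  assumes "prime_k_ideal A p" "a \<in> p" "b \<in> p"
  shows "a + 1 \<noteq> b"
proof
  assume "a + 1 = b"
  then have "\<exists>as bs. set as \<subseteq> p \<and> set bs \<subseteq> p \<and> sum_list as + 1 = sum_list bs"
    using assms(2,3) by (intro exI[of _ "[a]"] exI[of _ "[b]"]) simp
  moreover have "k_ideal A p" "1 \<in> A - p"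
    using assms(1) by (simp_all add: prime_k_ideal_def)
  ultimately show False
    unfolding k_ideal_def by blast
qed

lemma prime_k_ideal_vanishing_set:
  fixes f :: "'r::{comm_semiring_0, comm_monoid_mult} \<Rightarrow> 'b::idom"
  assumes add: "\<And>x y. f (x + y) = f x + f y" and mult: "\<And>x y. f (x * y) = f x * f y"
    and one: "f 1 = 1"
    and A: "0 \<in> A" "1 \<in> A" "\<And>a b. a \<in> A \<Longrightarrow> b \<in> A \<Longrightarrow> a * b \<in> A"
  shows "prime_k_ideal A {x \<in> A. f x = 0}"
proof -
  have zero: "f 0 = 0"
    using add[of 0 0] by (metis add.right_neutral add_left_cancel)
  have sum_list: "f (sum_list xs) = 0" if "set xs \<subseteq> {x \<in> A. f x = 0}" for xs
    using that by (induction xs) (simp_all add: add zero)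
  show ?thesis
    unfolding prime_k_ideal_def k_ideal_def monoid_ideal_def
    using A by (auto simp: zero one mult add sum_list dest!: arg_cong[of _ _ f])
qed

lemma topspace_spec_topology: "topspace (spec_topology A) = Spec A"
  by (force simp: spec_topology_def Spec_def prime_k_ideal_def)

lemma openin_spec_topology_down_closed:
  assumes "openin (spec_topology A) U" "p \<in> U" "q \<in> Spec A" "q \<subseteq> p"
  shows "q \<in> U"
proof -
  have "generate_topology_on ((\<lambda>h. {p \<in> Spec A. h \<notin> p}) ` A) U"
    using assms(1) by (simp add: spec_topology_def openin_topology_generated_by_iff)
  then show ?thesis
    using assms(2-) by (induction arbitrary: p) blast+
qed

lemma closedin_spec_topology_singleton_iff:
  "closedin (spec_topology A) {p} \<longleftrightarrow> p \<in> Spec A \<and> (\<forall>q\<in>Spec A. p \<subseteq> q \<longrightarrow> q = p)"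
proof
  assume closed: "closedin (spec_topology A) {p}"
  then have "openin (spec_topology A) (Spec A - {p})" and "p \<in> Spec A"
    by (simp_all add: closedin_def topspace_spec_topology)
  then show "p \<in> Spec A \<and> (\<forall>q\<in>Spec A. p \<subseteq> q \<longrightarrow> q = p)"
    using openin_spec_topology_down_closed by blast
next
  assume max: "p \<in> Spec A \<and> (\<forall>q\<in>Spec A. p \<subseteq> q \<longrightarrow> q = p)"
  then have "p \<subseteq> A"
    by (simp add: Spec_def prime_k_ideal_def k_ideal_def monoid_ideal_def)
  have "Spec A - {p} = (\<Union>h\<in>p. {q \<in> Spec A. h \<notin> q})"
    using max by blast
  also have "openin (spec_topology A) \<dots>"
    using \<open>p \<subseteq> A\<close> unfolding spec_topology_def openin_topology_generated_by_iff
    by (intro generate_topology_on.UN generate_topology_on.Basis) blast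
  finally show "closedin (spec_topology A) {p}"
    using max by (simp add: closedin_def topspace_spec_topology)
qed

section \<open>Evaluation at points of the quadric\<close>

lemma poly_mapping_single_induct [case_names zero add_single]:
  assumes "P 0" and "\<And>f a b. P f \<Longrightarrow> P (f + Poly_Mapping.single a b)"
  shows "P f"
proof (induction f rule: update_induct)
  case const
  show ?case by (fact assms(1))
next
  case (update f a b)
  have "Poly_Mapping.update a b f = f + Poly_Mapping.single a b"
    using update.hyps(1)
    by (intro poly_mapping_eqI) (auto simp: lookup_update lookup_add in_keys_iff lookup_single when_def)
  with assms(2)[OF update.IH] show ?case by simp
qed

lemma poly_mapping_nat_induct [case_names zero add_unit]:
  fixes e :: "'a \<Rightarrow>\<^sub>0 nat"
  assumes "P 0" and "\<And>i e. P e \<Longrightarrow> P (Poly_Mapping.single i 1 + e)"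
  shows "P e"
proof (induction e rule: poly_mapping_single_induct)
  case zero
  show ?case by (fact assms(1))
next
  case (add_single f a b)
  show ?case
  proof (induction b)
    case (Suc b)
    have "f + Poly_Mapping.single a (Suc b) = Poly_Mapping.single a 1 + (f + Poly_Mapping.single a b)"
      by (simp add: single_add[symmetric] ac_simps)
    with assms(2)[OF Suc.IH] show ?case by simp
  qed (simp add: add_single.IH)
qed

instance var :: finite
proof
  have "UNIV = {V1, V2, V3, V4}"
    using var.exhaust by blast
  then show "finite (UNIV :: var set)" by (metis finite.emptyI finite.insertI)
qed

definition monomial_eval :: "(var \<Rightarrow> 'a::comm_semiring_1) \<Rightarrow> (var \<Rightarrow>\<^sub>0 nat) \<Rightarrow> 'a" where
  "monomial_eval v e = (\<Prod>i\<in>UNIV. v i ^ Poly_Mapping.lookup e i)"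

definition poly_eval :: "(var \<Rightarrow> 'a::comm_semiring_1) \<Rightarrow> poly \<Rightarrow> 'a" where
  "poly_eval v p = (\<Sum>e\<in>Poly_Mapping.keys p. of_nat (Poly_Mapping.lookup p e) * monomial_eval v e)"

lemma monomial_eval_0 [simp]: "monomial_eval v 0 = 1"
  by (simp add: monomial_eval_def)

lemma monomial_eval_add: "monomial_eval v (e + e') = monomial_eval v e * monomial_eval v e'"
  by (simp add: monomial_eval_def lookup_add power_add prod.distrib)

lemma monomial_eval_var [simp]: "monomial_eval v (Poly_Mapping.single i 1) = v i"
proof -
  have "v j ^ Poly_Mapping.lookup (Poly_Mapping.single i 1) j = (if i = j then v j else 1)" for j
    by (simp add: lookup_single)
  then show ?thesis
    by (simp add: monomial_eval_def prod.delta')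
qed

lemma monomial_eval_eq_0_iff:
  "monomial_eval v e = (0 :: 'a::semidom) \<longleftrightarrow>
     (\<exists>i. v i = 0 \<and> 0 < Poly_Mapping.lookup e i)"
  by (simp add: monomial_eval_def)

lemma poly_eval_0 [simp]: "poly_eval v 0 = 0"
  by (simp add: poly_eval_def)

lemma poly_eval_add: "poly_eval v (p + q) = poly_eval v p + poly_eval v q"
  unfolding poly_eval_def by (rule setsum_keys_plus_distrib) (simp_all add: algebra_simps)

lemma poly_eval_single: "poly_eval v (Poly_Mapping.single e c) = of_nat c * monomial_eval v e"
  by (simp add: poly_eval_def)

lemma poly_eval_mult: "poly_eval v (p * q) = poly_eval v p * poly_eval v q"
proof -
  have single_mult: "poly_eval v (Poly_Mapping.single e c * q) = of_nat c * monomial_eval v e * poly_eval v q" for e c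
    by (induction q rule: poly_mapping_single_induct)
      (simp_all add: distrib_left poly_eval_add mult_single poly_eval_single monomial_eval_add ac_simps)
  show ?thesis
    by (induction p rule: poly_mapping_single_induct)
      (simp_all add: distrib_right poly_eval_add single_mult poly_eval_single)
qed

lemma poly_eval_1 [simp]: "poly_eval v 1 = 1"
  by (metis single_one poly_eval_single monomial_eval_0 of_nat_1 mult_1)

lemma poly_eval_Tvar [simp]: "poly_eval v (Tvar i) = v i"
  by (simp only: Tvar_def poly_eval_single monomial_eval_var of_nat_1 mult_1)

definition on_quadric :: "(var \<Rightarrow> 'a::comm_semiring_1) \<Rightarrow> bool" where
  "on_quadric v \<longleftrightarrow> v V1 * v V4 = v V2 * v V3 + 1"

lemma poly_eval_rel: "rel p q \<Longrightarrow> on_quadric v \<Longrightarrow> poly_eval v p = poly_eval v q"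
  by (induction rule: rel.induct) (simp_all add: poly_eval_add poly_eval_mult on_quadric_def)

text \<open>Evaluation only descends to R at points of the quadric; elsewhere it is set to 0.\<close>
lift_definition eval_R :: "(var \<Rightarrow> 'a::comm_semiring_1) \<Rightarrow> R \<Rightarrow> 'a" is
  "\<lambda>v p. if on_quadric v then poly_eval v p else 0"
  using poly_eval_rel by auto

lemma eval_R_add: "eval_R v (x + y) = eval_R v x + eval_R v y"
  by transfer (simp add: poly_eval_add)

lemma eval_R_mult: "eval_R v (x * y) = eval_R v x * eval_R v y"
  by transfer (simp add: poly_eval_mult)

lemma eval_R_1: "on_quadric v \<Longrightarrow> eval_R v 1 = 1"
  by transfer simp

definition monomial_R :: "(var \<Rightarrow>\<^sub>0 nat) \<Rightarrow> R" where
  "monomial_R e = abs_R (Poly_Mapping.single e 1)"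

lemma A_R_eq: "A_R = insert 0 (range monomial_R)"
  by (simp add: A_R_def monomial_R_def)

lemma monomial_R_0: "monomial_R 0 = 1"
  by (simp add: monomial_R_def one_R_def del: One_nat_def)

lemma monomial_R_add: "monomial_R (e + e') = monomial_R e * monomial_R e'"
  by (simp add: monomial_R_def times_R.abs_eq mult_single)

lemma T_eq_monomial_R: "T i = monomial_R (Poly_Mapping.single i 1)"
  by (simp add: monomial_R_def T_def Tvar_def)

lemma eval_R_monomial_R: "on_quadric v \<Longrightarrow> eval_R v (monomial_R e) = monomial_eval v e"
  by (simp add: monomial_R_def eval_R.abs_eq poly_eval_single)

lemma eval_R_T: "on_quadric v \<Longrightarrow> eval_R v (T i) = v i"
  by (simp add: T_eq_monomial_R eval_R_monomial_R del: One_nat_def)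

lemma T_quadric: "T V1 * T V4 = T V2 * T V3 + 1"
  by transfer (rule rel.base)

lemma zero_in_A_R: "0 \<in> A_R"
  by (simp add: A_R_eq)

lemma one_in_A_R: "1 \<in> A_R"
  by (metis A_R_eq monomial_R_0 insertI2 rangeI)

lemma T_in_A_R: "T i \<in> A_R"
  by (simp add: A_R_eq T_eq_monomial_R)

lemma mult_in_A_R: "x \<in> A_R \<Longrightarrow> y \<in> A_R \<Longrightarrow> x * y \<in> A_R"
  by (auto simp: A_R_eq monomial_R_add[symmetric])

lemma monomial_in_A_R: "monomial_R e \<in> A_R"
  by (simp add: A_R_eq)

lemma monomial_R_add_unit: "monomial_R (Poly_Mapping.single i 1 + e) = T i * monomial_R e"
  by (simp add: monomial_R_add T_eq_monomial_R)

lemma lookup_add_unit: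
  "Poly_Mapping.lookup (Poly_Mapping.single i 1 + e) j = (if i = j then 1 else 0) + Poly_Mapping.lookup e j"
  by (simp add: lookup_add lookup_single)

lemma monomial_R_mem_monoid_ideal:
  assumes I: "monoid_ideal A_R I" and "T i \<in> I" and "0 < Poly_Mapping.lookup e i"
  shows "monomial_R e \<in> I"
  using assms(3)
proof (induction e rule: poly_mapping_nat_induct)
  case zero
  then show ?case by simp
next
  case (add_unit j e)
  have "T j * monomial_R e \<in> I"
  proof (cases "j = i")
    case True
    then show ?thesis
      using I \<open>T i \<in> I\<close> monomial_in_A_R by (simp add: monoid_ideal_def)
  next
    case False
    then have "monomial_R e * T j \<in> I"
      using I add_unit T_in_A_R by (simp add: monoid_ideal_def lookup_add_unit del: One_nat_def)
    then show ?thesis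
      by (simp add: mult.commute)
  qed
  then show ?case
    by (simp add: monomial_R_add_unit del: One_nat_def)
qed

lemma monomial_R_mem_prime_iff:
  assumes p: "prime_k_ideal A_R p"
  shows "monomial_R e \<in> p \<longleftrightarrow> (\<exists>i. 0 < Poly_Mapping.lookup e i \<and> T i \<in> p)"
proof (induction e rule: poly_mapping_nat_induct)
  case zero
  show ?case
    using p by (simp add: monomial_R_0 prime_k_ideal_def)
next
  case (add_unit j e)
  have "monomial_R (Poly_Mapping.single j 1 + e) \<in> p \<longleftrightarrow> T j \<in> p \<or> monomial_R e \<in> p"
    using prime_k_ideal_mult_iff[OF p T_in_A_R monomial_in_A_R]
    by (simp add: monomial_R_add_unit del: One_nat_def)
  then show ?case
    using add_unit by (auto simp: lookup_add_unit simp del: One_nat_def)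
qed

lemma prime_k_ideal_A_R_eq:
  assumes p: "prime_k_ideal A_R p"
  shows "p = insert 0 (monomial_R ` {e. \<exists>i. 0 < Poly_Mapping.lookup e i \<and> T i \<in> p})"
proof -
  have "p \<subseteq> A_R" "0 \<in> p"
    using p by (simp_all add: prime_k_ideal_def k_ideal_def monoid_ideal_def)
  then show ?thesis
    using monomial_R_mem_prime_iff[OF p] by (force simp: A_R_eq)
qed

lemma prime_k_ideal_A_R_eqI:
  assumes "prime_k_ideal A_R p" "prime_k_ideal A_R q" "\<And>i. T i \<in> p \<longleftrightarrow> T i \<in> q"
  shows "p = q"
  using prime_k_ideal_A_R_eq[OF assms(1)] prime_k_ideal_A_R_eq[OF assms(2)] assms(3) by simp

section \<open>Classification of the prime k-ideals\<close>

definition zero_set :: "(var \<Rightarrow> 'a::idom) \<Rightarrow> R set" where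
  "zero_set v = {x \<in> A_R. eval_R v x = 0}"

lemma prime_k_ideal_zero_set: "on_quadric v \<Longrightarrow> prime_k_ideal A_R (zero_set v)"
  unfolding zero_set_def
  by (rule prime_k_ideal_vanishing_set)
    (simp_all add: eval_R_add eval_R_mult eval_R_1 zero_in_A_R one_in_A_R mult_in_A_R)

lemma T_mem_zero_set_iff: "on_quadric v \<Longrightarrow> T i \<in> zero_set v \<longleftrightarrow> v i = 0"
  by (simp add: zero_set_def T_in_A_R eval_R_T)

definition coordinate_ideal :: "var set \<Rightarrow> R set" where
  "coordinate_ideal S = ideal_gen A_R (T ` S)"

lemma monoid_ideal_coordinate_ideal: "monoid_ideal A_R (coordinate_ideal S)"
  unfolding coordinate_ideal_def
  by (rule monoid_ideal_ideal_gen) (auto simp: zero_in_A_R T_in_A_R mult_in_A_R)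

lemma zero_set_eq_coordinate_ideal:
  assumes v: "on_quadric v"
  shows "zero_set v = coordinate_ideal {i. v i = 0}"
proof
  show "coordinate_ideal {i. v i = 0} \<subseteq> zero_set v"
    unfolding coordinate_ideal_def
    using prime_k_ideal_zero_set[OF v] T_mem_zero_set_iff[OF v]
    by (intro ideal_gen_least) (auto simp: prime_k_ideal_def k_ideal_def)
  show "zero_set v \<subseteq> coordinate_ideal {i. v i = 0}"
  proof
    fix x
    assume x: "x \<in> zero_set v"
    have I: "monoid_ideal A_R (coordinate_ideal {i. v i = 0})"
      by (rule monoid_ideal_coordinate_ideal)
    have T: "T i \<in> coordinate_ideal {i. v i = 0}" if "v i = 0" for i
      using that ideal_gen_superset[of "T ` {i. v i = 0}" A_R] by (auto simp: coordinate_ideal_def)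
    show "x \<in> coordinate_ideal {i. v i = 0}"
    proof (cases "x = 0")
      case True
      with I show ?thesis by (simp add: monoid_ideal_def)
    next
      case False
      with x obtain e i where "x = monomial_R e" "v i = 0" "0 < Poly_Mapping.lookup e i"
        by (auto simp: zero_set_def A_R_eq eval_R_monomial_R[OF v] monomial_eval_eq_0_iff)
      with I T show ?thesis
        using monomial_R_mem_monoid_ideal by blast
    qed
  qed
qed

definition prime_supports :: "var set set" where
  "prime_supports = Pow {V1, V4} \<union> Pow {V2, V3}"

lemma prime_support_mem_prime_supports:
  assumes p: "prime_k_ideal A_R p"
  shows "{i. T i \<in> p} \<in> prime_supports"
proof (rule ccontr)
  assume "{i. T i \<in> p} \<notin> prime_supports"
  then obtain a b where "T a \<in> p" "a \<notin> {V1, V4}" "T b \<in> p" "b \<notin> {V2, V3}"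
    by (auto simp: prime_supports_def)
  then have "T V2 \<in> p \<or> T V3 \<in> p" "T V1 \<in> p \<or> T V4 \<in> p"
    by (cases a; cases b; simp)+
  then have "T V2 * T V3 \<in> p" "T V1 * T V4 \<in> p"
    by (simp_all add: prime_k_ideal_mult_iff[OF p T_in_A_R T_in_A_R])
  from prime_k_ideal_add_one[OF p this] show False
    by (simp add: T_quadric)
qed

lemma obtain_quadric_point:
  assumes "S \<in> prime_supports"
  obtains v :: "var \<Rightarrow> int" where "on_quadric v" "{i. v i = 0} = S"
proof -
  \<comment> \<open>values in \<open>{0, 2}\<close> make \<open>w V1 * w V4 - 1\<close> nonzero\<close>
  define w :: "var \<Rightarrow> int" where "w i = (if i \<in> S then 0 else 2)" for i
  consider "S \<subseteq> {V1, V4}" | "S \<subseteq> {V2, V3}"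
    using assms by (auto simp: prime_supports_def)
  then show thesis
  proof cases
    case 1
    let ?v = "case_var (w V1) 1 (w V1 * w V4 - 1) (w V4)"
    have "?v i = 0 \<longleftrightarrow> i \<in> S" for i
      using 1 by (cases i) (auto simp: w_def)
    then show thesis
      by (intro that) (auto simp: on_quadric_def w_def)
  next
    case 2
    let ?v = "case_var 1 (w V2) (w V3) (w V2 * w V3 + 1)"
    have "?v i = 0 \<longleftrightarrow> i \<in> S" for i
      using 2 by (cases i) (auto simp: w_def)
    then show thesis
      by (intro that) (auto simp: on_quadric_def w_def)
  qed
qed

lemma T_mem_coordinate_ideal_iff:
  assumes "S \<in> prime_supports"
  shows "T i \<in> coordinate_ideal S \<longleftrightarrow> i \<in> S"
proof -
  obtain v :: "var \<Rightarrow> int" where v: "on_quadric v" and S: "{i. v i = 0} = S"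
    using obtain_quadric_point[OF assms] .
  show ?thesis
    using zero_set_eq_coordinate_ideal[OF v] T_mem_zero_set_iff[OF v] S by auto
qed

lemma prime_k_ideal_coordinate_ideal:
  assumes "S \<in> prime_supports"
  shows "prime_k_ideal A_R (coordinate_ideal S)"
proof -
  obtain v :: "var \<Rightarrow> int" where v: "on_quadric v" and S: "{i. v i = 0} = S"
    using obtain_quadric_point[OF assms] .
  show ?thesis
    using prime_k_ideal_zero_set[OF v] zero_set_eq_coordinate_ideal[OF v] S by simp
qed

lemma prime_k_ideal_eq_coordinate_ideal:
  assumes p: "prime_k_ideal A_R p"
  shows "p = coordinate_ideal {i. T i \<in> p}"
proof (rule prime_k_ideal_A_R_eqI[OF p])
  have support: "{i. T i \<in> p} \<in> prime_supports"
    by (rule prime_support_mem_prime_supports[OF p])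
  then show "prime_k_ideal A_R (coordinate_ideal {i. T i \<in> p})"
    by (rule prime_k_ideal_coordinate_ideal)
  show "T i \<in> p \<longleftrightarrow> T i \<in> coordinate_ideal {i. T i \<in> p}" for i
    using T_mem_coordinate_ideal_iff[OF support] by simp
qed

lemma Spec_A_R: "Spec A_R = coordinate_ideal ` prime_supports"
proof
  show "Spec A_R \<subseteq> coordinate_ideal ` prime_supports"
    using prime_k_ideal_eq_coordinate_ideal prime_support_mem_prime_supports
    by (auto simp: Spec_def)
  show "coordinate_ideal ` prime_supports \<subseteq> Spec A_R"
    using prime_k_ideal_coordinate_ideal by (auto simp: Spec_def)
qed

lemma coordinate_ideal_subset_iff:
  assumes "S \<in> prime_supports" "S' \<in> prime_supports"
  shows "coordinate_ideal S \<subseteq> coordinate_ideal S' \<longleftrightarrow> S \<subseteq> S'"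
proof
  assume "coordinate_ideal S \<subseteq> coordinate_ideal S'"
  then show "S \<subseteq> S'"
    using T_mem_coordinate_ideal_iff[OF assms(1)] T_mem_coordinate_ideal_iff[OF assms(2)] by blast
next
  assume "S \<subseteq> S'"
  then have "T ` S \<subseteq> coordinate_ideal S'"
    using ideal_gen_superset by (fastforce simp: coordinate_ideal_def)
  with monoid_ideal_coordinate_ideal show "coordinate_ideal S \<subseteq> coordinate_ideal S'"
    unfolding coordinate_ideal_def by (rule ideal_gen_least)
qed

lemma coordinate_ideal_eq_iff:
  "S \<in> prime_supports \<Longrightarrow> S' \<in> prime_supports \<Longrightarrow> coordinate_ideal S = coordinate_ideal S' \<longleftrightarrow> S = S'"
  by (metis coordinate_ideal_subset_iff subset_antisym order_refl)

lemma card_Spec_A_R: "card (Spec A_R) = 7"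
proof -
  have "inj_on coordinate_ideal prime_supports"
    by (rule inj_onI) (simp add: coordinate_ideal_eq_iff)
  then have "card (Spec A_R) = card prime_supports"
    by (simp add: Spec_A_R card_image)
  also have "\<dots> = 7"
  proof -
    have "Pow {V1, V4} \<inter> Pow {V2, V3} = {{}}"
      by auto
    then show ?thesis
      using card_Un_Int[of "Pow {V1, V4}" "Pow {V2, V3}"] by (simp add: prime_supports_def card_Pow)
  qed
  finally show ?thesis .
qed

lemma closed_points_Spec_A_R:
  "{p \<in> Spec A_R. closedin (spec_topology A_R) {p}} = coordinate_ideal ` {{V1, V4}, {V2, V3}}"
proof -
  let ?maximal = "\<lambda>X x. \<forall>y\<in>X. x \<subseteq> y \<longrightarrow> y = x"
  have "{p \<in> Spec A_R. closedin (spec_topology A_R) {p}} = {p \<in> Spec A_R. ?maximal (Spec A_R) p}"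
    by (simp add: closedin_spec_topology_singleton_iff)
  also have "\<dots> = coordinate_ideal ` {S \<in> prime_supports. ?maximal prime_supports S}"
    unfolding Spec_A_R by (auto simp: coordinate_ideal_subset_iff coordinate_ideal_eq_iff)
  also have "{S \<in> prime_supports. ?maximal prime_supports S} = {{V1, V4}, {V2, V3}}"
    by (auto simp: prime_supports_def Pow_insert)
  finally show ?thesis .
qed

theorem mainTheorem1:
  shows "Spec A_R = {{0}, ideal_gen A_R {T V1}, ideal_gen A_R {T V2}, ideal_gen A_R {T V3},
                     ideal_gen A_R {T V4}, ideal_gen A_R {T V1, T V4}, ideal_gen A_R {T V2, T V3}}
       \<and> card (Spec A_R) = 7
       \<and> {p \<in> Spec A_R. closedin (spec_topology A_R) {p}}
           = {ideal_gen A_R {T V1, T V4}, ideal_gen A_R {T V2, T V3}}"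
proof -
  have supports: "prime_supports = {{}, {V1}, {V2}, {V3}, {V4}, {V1, V4}, {V2, V3}}"
    by (auto simp: prime_supports_def Pow_insert)
  have "coordinate_ideal {} = {0}"
    by (simp add: coordinate_ideal_def ideal_gen_empty zero_in_A_R)
  then show ?thesis
    using Spec_A_R card_Spec_A_R closed_points_Spec_A_R
    by (simp only: supports image_insert image_empty) (simp add: coordinate_ideal_def)
qed

end
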